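(* Let $n$ be even and let $v_0,\dots,v_{n+1}\in\mathbb{R}^n$ be hereditarily spanning. Then $dS(v_0,\dots,v_{n+1})=0$.
   Context: $\mathrm{Or}(v_1,\dots,v_n)=\operatorname{sign}\det(v_1,\dots,v_n)$ (zero if not a basis). Define $S:(\mathbb{R}^n)^{n+1}\to\{-1,0,1\}$ by $S(v_0,\dots,v_n)=0$ if $0$ is not in the interior of the convex hull of $v_0,\dots,v_n$, and otherwise $S(v_0,\dots,v_n)=(-1)^i\mathrm{Or}(v_0,\dots,\widehat{v_i},\dots,v_n)$ for any $i\in\{0,\dots,n\}$ (this is independent of $i$). A $k$-tuple ($k\ge n$) in $\mathbb{R}^n$ is hereditarily spanning if every $n$ of its elements span $\mathbb{R}^n$. $dS(v_0,\dots,v_{n+1})=\sum_{i=0}^{n+1}(-1)^iS(v_0,\dots,\widehat{v_i},\dots,v_{n+1})$. *)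

theory Defs
  imports "HOL-Analysis.Analysis" "HOL-Library.Numeral_Type"
begin

text \<open>Vectors in R^n are elements of real^'n; the coordinate/column order of
  'n is the one given by its enum class (for numeral types: 0,1,...,n-1).\<close>

definition enum_pos :: "'n::enum \<Rightarrow> nat" where
  "enum_pos j = (THE k. k < length (Enum.enum :: 'n list) \<and> Enum.enum ! k = j)"

definition Or :: "(real^'n::enum) list \<Rightarrow> real" where
  "Or ws = (if length ws = CARD('n)
            then sgn (det (\<chi> i j. (ws ! enum_pos j) $ i))
            else 0)"

definition del_nth :: "nat \<Rightarrow> 'a list \<Rightarrow> 'a list" where
  "del_nth i xs = take i xs @ drop (Suc i) xs"

text \<open>S(v_0,...,v_n); value 0 if 0 not in the interior of the convex hull,
  otherwise (-1)^i Or(v_0,..,hat v_i,..,v_n), here with i = 0.\<close>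
definition S :: "(real^'n::enum) list \<Rightarrow> real" where
  "S vs = (if 0 \<in> interior (convex hull (set vs)) then Or (del_nth 0 vs) else 0)"

definition dS :: "(real^'n::enum) list \<Rightarrow> real" where
  "dS vs = (\<Sum>i<length vs. (-1) ^ i * S (del_nth i vs))"

definition hereditarily_spanning :: "(real^'n::enum) list \<Rightarrow> bool" where
  "hereditarily_spanning vs \<longleftrightarrow> CARD('n) \<le> length vs \<and>
     (\<forall>I \<subseteq> {..<length vs}. card I = CARD('n) \<longrightarrow> span ((!) vs ` I) = UNIV)"

end

theory Submission
  imports Defs
begin

(* Let v_0,...,v_{n+1} be hereditarily spanning in R^n with n >= 2.  The
   linear relations  sum_k a_k v_k = 0  form a two-dimensional space in which a relation
   vanishing at two indices vanishes identically.  Call an index i positive if the other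
   n+1 vectors admit a relation with all coefficients positive; by the explicit description
   of the interior of a simplex this says exactly that 0 lies in the interior of their
   convex hull, i.e. that the i-th term of dS can be non-zero.  Comparing relations shows
   that there are either no positive indices or exactly two, i < i'.  For a positive index
   the determinants of the n-element subfamilies of the remaining n+1 vectors alternate in
   sign (a Cramer-type argument), and applying this to the common n-element family obtained
   by deleting both i and i' shows that the two surviving terms of dS cancel. *)

lemma enum_pos_nth:
  assumes "p < CARD('n)"
  shows "enum_pos ((Enum.enum::'n::enum list) ! p) = p"
proof -
  have "length (Enum.enum::'n list) = CARD('n)" by (simp add: card_UNIV_length_enum)
  then show ?thesis
    unfolding enum_pos_def using assms
    by (intro the_equality) (auto simp: nth_eq_iff_index_eq enum_distinct)
qed

lemma enum_pos_inverse:
  "enum_pos (j::'n::enum) < CARD('n) \<and> (Enum.enum::'n list) ! enum_pos j = j"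
proof -
  have L: "length (Enum.enum::'n list) = CARD('n)" by (simp add: card_UNIV_length_enum)
  have "j \<in> set (Enum.enum::'n list)" using UNIV_enum by auto
  then obtain k where k: "k < length (Enum.enum::'n list)" "Enum.enum ! k = j"
    by (auto simp: in_set_conv_nth)
  then have "enum_pos j = k" using enum_pos_nth[of k] L by auto
  then show ?thesis using k L by auto
qed

lemma enum_pos_eq_iff:
  assumes "p < CARD('n)"
  shows "enum_pos (j::'n::enum) = p \<longleftrightarrow> j = Enum.enum ! p"
  using enum_pos_nth[OF assms] enum_pos_inverse[of j] by metis

definition col_det :: "(nat \<Rightarrow> real^'n::enum) \<Rightarrow> real" where
  "col_det f = det (\<chi> i j. f (enum_pos j) $ i)"

lemma Or_eq_sgn_col_det:
  "length ws = CARD('n) \<Longrightarrow> Or (ws :: (real^'n::enum) list) = sgn (col_det ((!) ws))"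
  by (simp add: Or_def col_det_def)

lemma col_det_as_rows: "col_det (f :: nat \<Rightarrow> real^'n::enum) = det (\<chi> j. f (enum_pos j))"
proof -
  have "(\<chi> i j. f (enum_pos j) $ i) = transpose (\<chi> j. f (enum_pos j))"
    by (simp add: transpose_def vec_eq_iff)
  then show ?thesis unfolding col_det_def by (metis det_transpose)
qed

lemma col_det_cong:
  assumes "\<And>p. p < CARD('n) \<Longrightarrow> f p = g p"
  shows "col_det (f :: nat \<Rightarrow> real^'n::enum) = col_det g"
  unfolding col_det_def
  by (rule arg_cong[where f = det]) (simp add: vec_eq_iff assms enum_pos_inverse)

lemma col_det_linear:
  assumes "p < CARD('n)" "finite A"
  shows "col_det ((f :: nat \<Rightarrow> real^'n::enum)(p := (\<Sum>l\<in>A. c l *\<^sub>R g l)))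
       = (\<Sum>l\<in>A. c l * col_det (f(p := g l)))"
proof -
  let ?k = "(Enum.enum::'n list) ! p"
  have pos: "\<And>j. enum_pos j = p \<longleftrightarrow> j = ?k" using enum_pos_eq_iff[OF assms(1)] by blast
  have "col_det (f(p := (\<Sum>l\<in>A. c l *\<^sub>R g l)))
      = det (\<chi> j. if j = ?k then (\<Sum>l\<in>A. c l *s g l) else f (enum_pos j))"
    unfolding col_det_as_rows
    by (rule arg_cong[where f = det]) (auto simp: vec_eq_iff pos scalar_mult_eq_scaleR)
  also have "\<dots> = (\<Sum>l\<in>A. det (\<chi> j. if j = ?k then c l *s g l else f (enum_pos j)))"
    by (rule det_linear_row_sum[OF assms(2)])
  also have "\<dots> = (\<Sum>l\<in>A. c l * det (\<chi> j. if j = ?k then g l else f (enum_pos j)))"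
    by (simp add: det_row_mul)
  also have "\<dots> = (\<Sum>l\<in>A. c l * col_det (f(p := g l)))"
    unfolding col_det_as_rows
    by (intro sum.cong refl arg_cong2[where f = "(*)"] arg_cong[where f = det])
       (auto simp: vec_eq_iff pos)
  finally show ?thesis .
qed

lemma col_det_repeated:
  assumes "p < CARD('n)" "q < CARD('n)" "p \<noteq> q" "f p = f q"
  shows "col_det (f :: nat \<Rightarrow> real^'n::enum) = 0"
proof -
  let ?A = "\<chi> j. f (enum_pos (j::'n))"
  have "enum_pos ((Enum.enum::'n list) ! p) = p" "enum_pos ((Enum.enum::'n list) ! q) = q"
    using enum_pos_nth assms(1,2) by blast+
  then have "row ((Enum.enum::'n list) ! p) ?A = row (Enum.enum ! q) ?A"
    using assms(4) by (simp add: row_def)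
  moreover have "(Enum.enum::'n list) ! p \<noteq> Enum.enum ! q"
    using enum_pos_nth[OF assms(1)] enum_pos_nth[OF assms(2)] assms(3) by metis
  ultimately show ?thesis unfolding col_det_as_rows using det_identical_rows by blast
qed

definition skip :: "nat \<Rightarrow> nat \<Rightarrow> nat" where
  "skip i p = (if p < i then p else Suc p)"

lemma length_del_nth: "i < length xs \<Longrightarrow> length (del_nth i xs) = length xs - 1"
  by (simp add: del_nth_def)

lemma nth_del_nth:
  "i < length xs \<Longrightarrow> p < length xs - 1 \<Longrightarrow> del_nth i xs ! p = xs ! skip i p"
  by (auto simp: del_nth_def skip_def nth_append min_def)

lemma inj_on_skip: "inj_on (skip i) A"
  by (auto simp: inj_on_def skip_def split: if_splits)

lemma skip_image: "i < m \<Longrightarrow> skip i ` {..<m - 1} = {..<m} - {i}"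
proof -
  assume i: "i < m"
  have "k \<in> skip i ` {..<m - 1}" if "k < m" "k \<noteq> i" for k
  proof (cases "k < i")
    case True then show ?thesis using i by (auto simp: skip_def image_iff intro!: bexI[of _ k])
  next
    case False
    then show ?thesis using that by (auto simp: skip_def image_iff intro!: bexI[of _ "k - 1"])
  qed
  then show ?thesis using i by (auto simp: skip_def)
qed

lemma set_del_nth: "i < length xs \<Longrightarrow> set (del_nth i xs) = (!) xs ` ({..<length xs} - {i})"
proof -
  assume i: "i < length xs"
  have "set (del_nth i xs) = (\<lambda>p. del_nth i xs ! p) ` {..<length xs - 1}"
    using i by (auto simp: set_conv_nth length_del_nth image_iff)
  also have "\<dots> = (!) xs ` (skip i ` {..<length xs - 1})"
    using i by (auto simp: nth_del_nth image_image intro: image_cong)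
  finally show ?thesis using skip_image[OF i] by simp
qed

lemma sum_skip: "i < m \<Longrightarrow> (\<Sum>p<m - 1. g (skip i p)) = (\<Sum>k\<in>{..<m} - {i}. g k)"
  using sum.reindex[OF inj_on_skip[of i "{..<m - 1}"], of g] skip_image[of i m] by simp

lemma sgn_opposite:
  fixes a b X Y :: real
  assumes "a > 0" "b > 0" "a * X + b * Y = 0"
  shows "sgn X = - sgn Y"
proof -
  have "a * X = - (b * Y)" using assms(3) by (simp add: eq_neg_iff_add_eq_0)
  then have "sgn (a * X) = sgn (- (b * Y))" by simp
  then show ?thesis using assms(1,2) by (simp add: sgn_mult)
qed

(* Deleting f (k+1) and deleting f k give families that differ only in column k.
   Expanding f k + f (k+1) (weighted) through the relation, every other summand repeats a
   column, which yields a Cramer-type identity between the two determinants. *)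
lemma col_det_adjacent_deletions:
  fixes f :: "nat \<Rightarrow> real^'n::enum"
  assumes k: "k < CARD('n)" and rel: "(\<Sum>p\<in>{..CARD('n)}. a p *\<^sub>R f p) = 0"
  shows "a k * col_det (\<lambda>p. f (skip (Suc k) p)) + a (Suc k) * col_det (\<lambda>p. f (skip k p)) = 0"
proof -
  define g where "g = (\<lambda>p. f (skip (Suc k) p))"
  have gk: "g(k := f k) = g" by (simp add: g_def skip_def fun_upd_idem)
  have g_Suc_k: "col_det (g(k := f (Suc k))) = col_det (\<lambda>p. f (skip k p))"
    by (rule col_det_cong) (auto simp: g_def skip_def)
  let ?B = "{..CARD('n)} - {k, Suc k}"
  have "(\<Sum>p\<in>{..CARD('n)}. a p *\<^sub>R f p)
      = (\<Sum>l\<in>{k, Suc k}. a l *\<^sub>R f l) + (\<Sum>l\<in>?B. a l *\<^sub>R f l)"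
    using k by (subst sum.subset_diff[of "{k, Suc k}"]) auto
  then have two_terms: "(\<Sum>l\<in>{k, Suc k}. a l *\<^sub>R f l) = (\<Sum>l\<in>?B. (- a l) *\<^sub>R f l)"
    using rel by (simp add: sum_negf eq_neg_iff_add_eq_0)
  have "col_det (g(k := (\<Sum>l\<in>{k, Suc k}. a l *\<^sub>R f l)))
      = a k * col_det g + a (Suc k) * col_det (\<lambda>p. f (skip k p))"
    using col_det_linear[of k "{k, Suc k}" g a f] k gk g_Suc_k by simp
  moreover have "col_det (g(k := (\<Sum>l\<in>?B. (- a l) *\<^sub>R f l))) = 0"
  proof -
    have "col_det (g(k := f l)) = 0" if l: "l \<in> ?B" for l
    proof -
      define q where "q = (if l < k then l else l - 1)"
      have q: "q < CARD('n)" "k \<noteq> q" and "(g(k := f l)) k = (g(k := f l)) q"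
        using l k by (auto simp: q_def g_def skip_def)
      then show ?thesis using col_det_repeated[OF k] by blast
    qed
    then show ?thesis using col_det_linear[of k ?B g "\<lambda>l. - a l" f] k by simp
  qed
  ultimately show ?thesis using two_terms g_def by simp
qed

lemma col_det_sign_alternates:
  fixes f :: "nat \<Rightarrow> real^'n::enum"
  assumes rel: "(\<Sum>p\<in>{..CARD('n)}. a p *\<^sub>R f p) = 0"
    and pos: "\<And>p. p \<le> CARD('n) \<Longrightarrow> a p > 0"
  shows "k \<le> CARD('n) \<Longrightarrow>
    sgn (col_det (\<lambda>p. f (skip k p))) = (-1)^k * sgn (col_det (\<lambda>p. f (skip 0 p)))"
proof (induction k)
  case 0 then show ?case by simp
next
  case (Suc k)
  then have k: "k < CARD('n)" by simp
  have "sgn (col_det (\<lambda>p. f (skip (Suc k) p))) = - sgn (col_det (\<lambda>p. f (skip k p)))"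
    by (rule sgn_opposite[OF pos pos col_det_adjacent_deletions[OF k rel]]) (use k in auto)
  then show ?case using Suc k by simp
qed

(* A positive linear relation among the points of T is, up to scaling, the only one as soon
   as T minus one point is linearly independent; hence T is affinely independent. *)
lemma affine_independent_if_positive_relation:
  fixes T :: "'a::real_vector set"
  assumes T: "finite T" "x0 \<in> T" and indep: "\<not> dependent (T - {x0})"
    and pos: "\<forall>x\<in>T. 0 < u x" and rel: "(\<Sum>x\<in>T. u x *\<^sub>R x) = 0"
  shows "\<not> affine_dependent T"
proof
  assume "affine_dependent T"
  then obtain U where U: "sum U T = 0" "\<exists>v\<in>T. U v \<noteq> 0" "(\<Sum>x\<in>T. U x *\<^sub>R x) = 0"
    using affine_dependent_explicit_finite[OF T(1)] by blast
  define l where "l = U x0 / u x0"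
  define W where "W x = U x - l * u x" for x
  have "u x0 > 0" using pos T(2) by blast
  then have W_x0: "W x0 = 0" by (simp add: W_def l_def)
  have "(\<Sum>x\<in>T. W x *\<^sub>R x) = (\<Sum>x\<in>T. U x *\<^sub>R x) - l *\<^sub>R (\<Sum>x\<in>T. u x *\<^sub>R x)"
    by (simp add: W_def scaleR_diff_left sum_subtractf scaleR_sum_right)
  also have "\<dots> = 0" using U(3) rel by simp
  finally have "(\<Sum>x\<in>T - {x0}. W x *\<^sub>R x) = 0"
    using T W_x0 by (simp add: sum.remove)
  then have "\<forall>x\<in>T - {x0}. W x = 0"
    using indep dependent_finite[of "T - {x0}"] T(1) by blast
  then have "W x = 0" if "x \<in> T" for x
    using that W_x0 by blast
  then have U_eq: "U x = l * u x" if "x \<in> T" for x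
    using that by (simp add: W_def)
  have "l * sum u T = sum U T" by (simp add: sum_distrib_left U_eq)
  moreover have "sum u T > 0" using sum_pos[OF T(1)] pos T(2) by blast
  ultimately have "l = 0" using U(1) by simp
  then show False using U(2) U_eq by simp
qed

lemma zero_in_interior_convex_hull_iff:
  fixes T :: "'a::euclidean_space set"
  assumes card: "card T = Suc DIM('a)"
  shows "0 \<in> interior (convex hull T) \<longleftrightarrow>
    \<not> affine_dependent T \<and> (\<exists>u. (\<forall>x\<in>T. 0 < u x) \<and> (\<Sum>x\<in>T. u x *\<^sub>R x) = 0)"
proof
  assume h: "0 \<in> interior (convex hull T)"
  then have "\<not> affine_dependent T" using interior_convex_hull_eq_empty[OF card] by blast
  with h card show "\<not> affine_dependent T \<and> (\<exists>u. (\<forall>x\<in>T. 0 < u x) \<and> (\<Sum>x\<in>T. u x *\<^sub>R x) = 0)"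
    using interior_convex_hull_explicit_minimal by fastforce
next
  assume "\<not> affine_dependent T \<and> (\<exists>u. (\<forall>x\<in>T. 0 < u x) \<and> (\<Sum>x\<in>T. u x *\<^sub>R x) = 0)"
  then obtain u where na: "\<not> affine_dependent T" and u: "\<forall>x\<in>T. 0 < u x" "(\<Sum>x\<in>T. u x *\<^sub>R x) = 0"
    by blast
  have fin: "finite T" "T \<noteq> {}" using card by (auto intro: card_ge_0_finite)
  define s where "s = sum u T"
  have s: "s > 0" unfolding s_def using sum_pos[OF fin] u(1) by blast
  have "(\<Sum>x\<in>T. (u x / s) *\<^sub>R x) = (1 / s) *\<^sub>R (\<Sum>x\<in>T. u x *\<^sub>R x)"
    by (simp add: scaleR_sum_right)
  then have "(\<forall>x\<in>T. 0 < u x / s) \<and> (\<Sum>x\<in>T. u x / s) = 1 \<and> (\<Sum>x\<in>T. (u x / s) *\<^sub>R x) = 0"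
    using u s by (simp add: sum_divide_distrib[symmetric] s_def)
  then show "0 \<in> interior (convex hull T)"
    using interior_convex_hull_explicit_minimal[OF na] card by auto
qed

locale hspan_family =
  fixes vs :: "(real^'n::enum) list"
  assumes length_vs: "length vs = CARD('n) + 2"
    and hspan: "hereditarily_spanning vs"
    and dim_ge_2: "CARD('n) \<ge> 2"
begin

lemma span_subfamily:
  "I \<subseteq> {..<length vs} \<Longrightarrow> card I = CARD('n) \<Longrightarrow> span ((!) vs ` I) = UNIV"
  using hspan unfolding hereditarily_spanning_def by blast

(* Two equal vectors together with n-2 further ones would be n vectors spanning a space of
   dimension at most n-1; this is where n >= 2 is needed. *)
lemma distinct_vs: "distinct vs"
proof (rule ccontr)
  assume "\<not> distinct vs"
  then obtain i j where ij: "i < length vs" "j < length vs" "i \<noteq> j" "vs ! i = vs ! j"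
    by (auto simp: distinct_conv_nth)
  have "card ({..<length vs} - {i, j}) = CARD('n)" using ij length_vs by (simp add: card_Diff_subset)
  then obtain J where J: "J \<subseteq> {..<length vs} - {i, j}" "card J = CARD('n) - 2"
    using obtain_subset_with_card_n[of "CARD('n) - 2" "{..<length vs} - {i, j}"] by auto
  have fin: "finite J" using J(1) finite_subset by blast
  let ?I = "insert i (insert j J)"
  have I: "?I \<subseteq> {..<length vs}" "card ?I = CARD('n)"
    using J fin ij dim_ge_2 by (auto simp: card_insert_if)
  have "card ((!) vs ` ?I) = card ((!) vs ` insert i J)" using ij by (simp add: insert_commute)
  also have "\<dots> \<le> card (insert i J)" using fin by (intro card_image_le) simp
  also have "\<dots> \<le> Suc (card J)" using fin by (simp add: card_insert_if)
  also have "\<dots> < CARD('n)" using J(2) dim_ge_2 by simp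
  finally have "card ((!) vs ` ?I) < CARD('n)" .
  moreover have "dim ((!) vs ` ?I) \<le> card ((!) vs ` ?I)" by (rule dim_le_card') (simp add: fin)
  moreover have "dim ((!) vs ` ?I) = DIM((real, 'n) vec)"
    using span_subfamily[OF I] dim_eq_full by blast
  ultimately show False by simp
qed

lemma inj_on_nth_vs: "I \<subseteq> {..<length vs} \<Longrightarrow> inj_on ((!) vs) I"
  using distinct_vs unfolding inj_on_def by (metis lessThan_iff nth_eq_iff_index_eq subsetD)

lemma sum_over_subfamily:
  "R \<subseteq> {..<length vs} \<Longrightarrow> (\<Sum>x\<in>(!) vs ` R. h x) = (\<Sum>k\<in>R. h (vs ! k))"
  by (simp add: sum.reindex[OF inj_on_nth_vs])

lemma independent_subfamily:
  assumes I: "I \<subseteq> {..<length vs}" "card I = CARD('n)"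
  shows "independent ((!) vs ` I)"
proof (rule card_le_dim_spanning[where V = UNIV])
  show "finite ((!) vs ` I)" using I finite_subset by blast
  show "card ((!) vs ` I) \<le> dim (UNIV :: (real, 'n) vec set)"
    using card_image[OF inj_on_nth_vs[OF I(1)]] I(2) by simp
qed (use span_subfamily[OF I] in auto)

lemma coefficients_vanish:
  assumes I: "I \<subseteq> {..<length vs}" "card I = CARD('n)"
    and rel: "(\<Sum>k\<in>I. c k *\<^sub>R vs ! k) = 0" and k: "k \<in> I"
  shows "c k = 0"
proof -
  have inj: "inj_on ((!) vs) I" by (rule inj_on_nth_vs[OF I(1)])
  let ?c = "c \<circ> the_inv_into I ((!) vs)"
  have "(\<Sum>v\<in>(!) vs ` I. ?c v *\<^sub>R v) = 0"
    using rel by (simp add: sum.reindex[OF inj] the_inv_into_f_f[OF inj])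
  moreover have "finite I" using I finite_subset by blast
  ultimately have "\<forall>v\<in>(!) vs ` I. ?c v = 0"
    using independent_subfamily[OF I] dependent_finite[of "(!) vs ` I"] by blast
  then show ?thesis using k by (simp add: the_inv_into_f_f[OF inj])
qed

definition relation :: "(nat \<Rightarrow> real) \<Rightarrow> bool" where
  "relation a \<longleftrightarrow> (\<Sum>k<length vs. a k *\<^sub>R vs ! k) = 0"

lemma relation_lincomb:
  assumes "relation a" "relation b"
  shows "relation (\<lambda>k. x * a k + y * b k)"
proof -
  have "(\<Sum>k<length vs. (x * a k + y * b k) *\<^sub>R vs ! k)
      = x *\<^sub>R (\<Sum>k<length vs. a k *\<^sub>R vs ! k) + y *\<^sub>R (\<Sum>k<length vs. b k *\<^sub>R vs ! k)"
    by (simp add: scaleR_add_left sum.distrib scaleR_sum_right)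
  then show ?thesis using assms by (simp add: relation_def)
qed

lemma relation_iff_supported_off:
  "i < length vs \<Longrightarrow> a i = 0 \<Longrightarrow>
    relation a \<longleftrightarrow> (\<Sum>k\<in>{..<length vs} - {i}. a k *\<^sub>R vs ! k) = 0"
  unfolding relation_def by (subst sum.mono_neutral_right[of "{..<length vs}"]) auto

(* The remaining n vectors are independent, so a relation vanishing at two indices is
   trivial: the relation space has dimension at most two. *)
lemma relation_two_zeros:
  assumes "relation a" "i < length vs" "j < length vs" "i \<noteq> j" "a i = 0" "a j = 0"
    and "k < length vs"
  shows "a k = 0"
proof (cases "k \<in> {i, j}")
  case True then show ?thesis using assms by auto
next
  case False
  let ?I = "{..<length vs} - {i, j}"
  have "(\<Sum>k<length vs. a k *\<^sub>R vs ! k) = (\<Sum>k\<in>?I. a k *\<^sub>R vs ! k)"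
    by (rule sum.mono_neutral_right) (use assms in auto)
  then have "(\<Sum>k\<in>?I. a k *\<^sub>R vs ! k) = 0" using assms(1) by (simp add: relation_def)
  moreover have "card ?I = CARD('n)" using assms length_vs by (simp add: card_Diff_subset)
  ultimately show ?thesis using coefficients_vanish[of ?I a k] False assms by auto
qed

(* Each vector is a combination of n others, giving a relation with a_i = 1. *)
lemma relation_normalized_at:
  assumes i: "i < length vs"
  shows "\<exists>b. relation b \<and> b i = 1"
proof -
  obtain I where I: "I \<subseteq> {..<length vs} - {i}" "card I = CARD('n)"
    using obtain_subset_with_card_n[of "CARD('n)" "{..<length vs} - {i}"] i length_vs
    by (auto simp: card_Diff_subset)
  have fin: "finite I" and I': "I \<subseteq> {..<length vs}" using I finite_subset by auto
  have "vs ! i \<in> span ((!) vs ` I)" using span_subfamily[OF I' I(2)] by simp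
  then obtain u where "vs ! i = (\<Sum>v\<in>(!) vs ` I. u v *\<^sub>R v)"
    using span_finite[of "(!) vs ` I"] fin by auto
  then have u: "vs ! i = (\<Sum>k\<in>I. u (vs ! k) *\<^sub>R vs ! k)"
    by (simp add: sum_over_subfamily[OF I'])
  define b where "b k = (if k = i then 1 else if k \<in> I then - u (vs ! k) else 0)" for k
  have "(\<Sum>k<length vs. b k *\<^sub>R vs ! k) = (\<Sum>k\<in>insert i I. b k *\<^sub>R vs ! k)"
    by (rule sum.mono_neutral_right) (use i I in \<open>auto simp: b_def\<close>)
  also have "\<dots> = vs ! i + (\<Sum>k\<in>I. b k *\<^sub>R vs ! k)"
    using I fin by (subst sum.insert) (auto simp: b_def)
  also have "(\<Sum>k\<in>I. b k *\<^sub>R vs ! k) = (\<Sum>k\<in>I. - (u (vs ! k) *\<^sub>R vs ! k))"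
    by (rule sum.cong) (use I in \<open>auto simp: b_def\<close>)
  finally have "relation b" using u by (simp add: relation_def sum_negf)
  then show ?thesis by (auto simp: b_def)
qed

definition positive_index :: "nat \<Rightarrow> bool" where
  "positive_index i \<longleftrightarrow>
     (\<exists>a. relation a \<and> a i = 0 \<and> (\<forall>j<length vs. j \<noteq> i \<longrightarrow> a j > 0))"

(* Given positive relations a_i, a_j, a_l vanishing at i, j, l, the combination
   a_l - x a_i - y a_j can be made to vanish at i and j with x, y > 0; it is then zero,
   yet negative at l. *)
lemma no_three_positive_indices:
  assumes "i < length vs" "j < length vs" "l < length vs" "i \<noteq> j" "i \<noteq> l" "j \<noteq> l"
    and "positive_index i" "positive_index j" "positive_index l"
  shows False
proof -
  obtain ai where hi: "relation ai" "ai i = 0" "\<forall>k<length vs. k \<noteq> i \<longrightarrow> ai k > 0"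
    using assms positive_index_def by blast
  obtain aj where hj: "relation aj" "aj j = 0" "\<forall>k<length vs. k \<noteq> j \<longrightarrow> aj k > 0"
    using assms positive_index_def by blast
  obtain al where hl: "relation al" "al l = 0" "\<forall>k<length vs. k \<noteq> l \<longrightarrow> al k > 0"
    using assms positive_index_def by blast
  define x where "x = al j / ai j"
  define y where "y = al i / aj i"
  have pos: "ai j > 0" "al j > 0" "aj i > 0" "al i > 0" using hi hj hl assms by auto
  then have "x > 0" "y > 0" by (simp_all add: x_def y_def)
  define c where "c k = 1 * (1 * al k + (- x) * ai k) + (- y) * aj k" for k
  have "relation c" unfolding c_def by (intro relation_lincomb hi(1) hj(1) hl(1))
  moreover have "c i = 0" "c j = 0" using hi(2) hj(2) pos by (simp_all add: c_def x_def y_def)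
  ultimately have "c l = 0" using relation_two_zeros assms by blast
  moreover have "x * ai l > 0" "y * aj l > 0" using \<open>x > 0\<close> \<open>y > 0\<close> hi hj assms by auto
  then have "c l < 0" using hl by (simp add: c_def)
  ultimately show False by simp
qed

(* Positive indices come in pairs: starting from a positive relation a vanishing at i and
   a relation b with b_i = 1, subtract from b the largest multiple of a keeping all
   coefficients non-negative; the result is a positive relation vanishing at some j. *)
lemma positive_index_partner:
  assumes i: "i < length vs" and pos_i: "positive_index i"
  shows "\<exists>j<length vs. j \<noteq> i \<and> positive_index j"
proof -
  obtain a where a: "relation a" "a i = 0" "\<forall>k<length vs. k \<noteq> i \<longrightarrow> a k > 0"
    using pos_i positive_index_def by blast
  obtain b where b: "relation b" "b i = 1" using relation_normalized_at[OF i] by blast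
  let ?R = "{..<length vs} - {i}"
  have "?R \<noteq> {}" using length_vs i by (cases "i = 0") auto
  define s where "s = Min ((\<lambda>k. b k / a k) ` ?R)"
  have "s \<in> (\<lambda>k. b k / a k) ` ?R" unfolding s_def by (rule Min_in) (use \<open>?R \<noteq> {}\<close> in auto)
  then obtain j where j: "j \<in> ?R" "b j / a j = s" by auto
  define z where "z k = 1 * b k + (- s) * a k" for k
  have rel_z: "relation z" unfolding z_def by (intro relation_lincomb a b)
  have z_i: "z i = 1" and z_j: "z j = 0" using a b j by (auto simp: z_def field_simps)
  have z_nonneg: "z k \<ge> 0" if "k \<in> ?R" for k
  proof -
    have "s \<le> b k / a k" unfolding s_def using that by auto
    moreover have "a k > 0" using that a by auto
    ultimately show ?thesis by (simp add: z_def pos_le_divide_eq)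
  qed
  have "z k > 0" if k: "k < length vs" "k \<noteq> j" for k
  proof (cases "k = i")
    case True then show ?thesis using z_i by simp
  next
    case False
    have "z k \<noteq> 0" using relation_two_zeros[OF rel_z, of j k i] j k i z_i z_j by auto
    then show ?thesis using z_nonneg k False by force
  qed
  then have "positive_index j" using rel_z z_j positive_index_def by blast
  then show ?thesis using j by auto
qed

lemma positive_indices_cases:
  obtains "{i. i < length vs \<and> positive_index i} = {}"
  | p q where "p < q" "q < length vs" "positive_index p" "positive_index q"
      "{i. i < length vs \<and> positive_index i} = {p, q}"
proof (cases "\<exists>p<length vs. positive_index p")
  case False then show ?thesis using that(1) by blast
next
  case True
  then obtain p where p: "p < length vs" "positive_index p" by blast
  obtain q where q: "q < length vs" "q \<noteq> p" "positive_index q"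
    using positive_index_partner[OF p] by blast
  have pq: "{i. i < length vs \<and> positive_index i} = {p, q}"
    using no_three_positive_indices p q by blast
  show ?thesis
  proof (cases "p < q")
    case True then show ?thesis using that(2) p q pq by blast
  next
    case False then show ?thesis using that(2)[of q p] p q pq by (simp add: insert_commute)
  qed
qed

lemma zero_in_interior_iff_positive_index:
  assumes i: "i < length vs"
  shows "0 \<in> interior (convex hull set (del_nth i vs)) \<longleftrightarrow> positive_index i"
proof -
  let ?R = "{..<length vs} - {i}"
  let ?T = "(!) vs ` ?R"
  have R: "?R \<subseteq> {..<length vs}" by auto
  have inj: "inj_on ((!) vs) ?R" by (rule inj_on_nth_vs[OF R])
  have "card ?T = Suc DIM((real, 'n) vec)"
    using card_image[OF inj] i length_vs by (simp add: card_Diff_subset)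
  then have "0 \<in> interior (convex hull set (del_nth i vs)) \<longleftrightarrow>
      \<not> affine_dependent ?T \<and> (\<exists>u. (\<forall>x\<in>?T. 0 < u x) \<and> (\<Sum>x\<in>?T. u x *\<^sub>R x) = 0)"
    unfolding set_del_nth[OF i] by (rule zero_in_interior_convex_hull_iff)
  also have "\<dots> \<longleftrightarrow> positive_index i"
  proof
    assume "\<not> affine_dependent ?T \<and> (\<exists>u. (\<forall>x\<in>?T. 0 < u x) \<and> (\<Sum>x\<in>?T. u x *\<^sub>R x) = 0)"
    then obtain u where u: "\<forall>x\<in>?T. 0 < u x" "(\<Sum>x\<in>?T. u x *\<^sub>R x) = 0" by blast
    define a where "a k = (if k = i then 0 else u (vs ! k))" for k
    have "(\<Sum>k\<in>?R. a k *\<^sub>R vs ! k) = 0"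
      using u(2) by (simp add: sum_over_subfamily[OF R] a_def)
    then have "relation a" using relation_iff_supported_off[OF i] by (simp add: a_def)
    then show "positive_index i" unfolding positive_index_def using u(1) by (auto simp: a_def)
  next
    assume "positive_index i"
    then obtain a where a: "relation a" "a i = 0" "\<forall>j<length vs. j \<noteq> i \<longrightarrow> a j > 0"
      using positive_index_def by blast
    define u where "u x = a (the_inv_into ?R ((!) vs) x)" for x
    have u: "u (vs ! k) = a k" if "k \<in> ?R" for k
      using that by (simp add: u_def the_inv_into_f_f[OF inj])
    have u_pos: "\<forall>x\<in>?T. 0 < u x" using u a by auto
    have u_rel: "(\<Sum>x\<in>?T. u x *\<^sub>R x) = 0"
      using a relation_iff_supported_off[OF i] by (simp add: sum_over_subfamily[OF R] u)
    define j :: nat where "j = (if i = 0 then 1 else 0)"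
    have j: "j \<in> ?R" using i length_vs by (auto simp: j_def)
    have "card (?R - {j}) = CARD('n)"
      using i j length_vs by (simp add: card_Diff_subset)
    then have "independent ((!) vs ` (?R - {j}))"
      by (intro independent_subfamily) auto
    moreover have "?T - {vs ! j} = (!) vs ` (?R - {j})"
      using inj_on_image_set_diff[OF inj, of ?R "{j}"] j by simp
    ultimately have "\<not> dependent (?T - {vs ! j})" by simp
    then have "\<not> affine_dependent ?T"
      using affine_independent_if_positive_relation[of ?T "vs ! j" u] j u_pos u_rel by blast
    then show "\<not> affine_dependent ?T \<and> (\<exists>u. (\<forall>x\<in>?T. 0 < u x) \<and> (\<Sum>x\<in>?T. u x *\<^sub>R x) = 0)"
      using u_pos u_rel by blast
  qed
  finally show ?thesis .
qed

(* Sign of the determinant of the family obtained by deleting v_i and then the first of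
   the remaining vectors; up to the sign (-1)^i this is the value of the i-th term of dS. *)
definition del_sign :: "nat \<Rightarrow> real" where
  "del_sign i = sgn (col_det (\<lambda>p. vs ! skip i (skip 0 p)))"

lemma S_del_nth:
  assumes i: "i < length vs"
  shows "S (del_nth i vs) = (if positive_index i then del_sign i else 0)"
proof -
  have len1: "length (del_nth i vs) = Suc CARD('n)" using i length_vs by (simp add: length_del_nth)
  then have len2: "length (del_nth 0 (del_nth i vs)) = CARD('n)" by (simp add: length_del_nth)
  have "col_det ((!) (del_nth 0 (del_nth i vs))) = col_det (\<lambda>p. vs ! skip i (skip 0 p))"
    by (rule col_det_cong) (use i len1 length_vs in \<open>simp add: nth_del_nth skip_def\<close>)
  then show ?thesis
    using zero_in_interior_iff_positive_index[OF i] Or_eq_sgn_col_det[OF len2]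
    by (simp add: S_def del_sign_def)
qed

(* For a positive index i, the remaining vectors satisfy a positive relation, so deleting
   the k-th of them instead of the first changes the sign by (-1)^k. *)
lemma del_sign_alternates:
  assumes i: "i < length vs" and pos_i: "positive_index i" and k: "k \<le> CARD('n)"
  shows "sgn (col_det (\<lambda>p. vs ! skip i (skip k p))) = (-1)^k * del_sign i"
proof -
  obtain a where a: "relation a" "a i = 0" "\<forall>j<length vs. j \<noteq> i \<longrightarrow> a j > 0"
    using pos_i positive_index_def by blast
  have "{..CARD('n)} = {..<length vs - 1}" using length_vs by auto
  then have "(\<Sum>p\<in>{..CARD('n)}. a (skip i p) *\<^sub>R vs ! skip i p)
      = (\<Sum>k\<in>{..<length vs} - {i}. a k *\<^sub>R vs ! k)"
    using sum_skip[OF i] by simp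
  then have "(\<Sum>p\<in>{..CARD('n)}. a (skip i p) *\<^sub>R vs ! skip i p) = 0"
    using a relation_iff_supported_off[OF i] by simp
  moreover have "a (skip i p) > 0" if "p \<le> CARD('n)" for p
    using a that length_vs by (auto simp: skip_def)
  ultimately show ?thesis
    using col_det_sign_alternates[of "\<lambda>p. a (skip i p)" "\<lambda>p. vs ! skip i p" k] k
    by (simp add: del_sign_def)
qed

(* Deleting v_i and then the (i'-1)-th remaining vector is the same as deleting v_i' and
   then the i-th remaining vector; comparing the two signs makes the terms cancel. *)
lemma del_signs_cancel:
  assumes ii': "i < i'" "i' < length vs" and pos: "positive_index i" "positive_index i'"
  shows "(-1)^i * del_sign i + (-1)^i' * del_sign i' = 0"
proof -
  obtain q where q: "i' = Suc q" using ii' by (cases i') auto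
  have "(\<lambda>p. vs ! skip i (skip q p)) = (\<lambda>p. vs ! skip i' (skip i p))"
    using ii' q by (auto simp: skip_def fun_eq_iff)
  moreover have "sgn (col_det (\<lambda>p. vs ! skip i (skip q p))) = (-1)^q * del_sign i"
    by (rule del_sign_alternates) (use ii' pos q length_vs in auto)
  moreover have "sgn (col_det (\<lambda>p. vs ! skip i' (skip i p))) = (-1)^i * del_sign i'"
    by (rule del_sign_alternates) (use ii' pos q length_vs in auto)
  ultimately have "(-1)^q * del_sign i = (-1)^i * del_sign i'" by simp
  then have "(-1)^i * ((-1)^q * del_sign i) = del_sign i'"
    by (simp add: power_mult_distrib[symmetric])
  then show ?thesis using q by (cases "even i"; cases "even q") auto
qed

lemma dS_as_positive_sum:
  "dS vs = (\<Sum>i\<in>{i. i < length vs \<and> positive_index i}. (-1)^i * del_sign i)"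
proof -
  have "dS vs = (\<Sum>i<length vs. if positive_index i then (-1)^i * del_sign i else 0)"
    unfolding dS_def by (rule sum.cong) (auto simp: S_del_nth)
  also have "\<dots> = (\<Sum>i\<in>{i. i < length vs \<and> positive_index i}. (-1)^i * del_sign i)"
    by (simp add: sum.If_cases Int_def conj_commute)
  finally show ?thesis .
qed

end

theorem proposition8p1:
  fixes vs :: "(real^'n::enum) list"
  assumes "even CARD('n)"
    and "length vs = CARD('n) + 2"
    and "hereditarily_spanning vs"
  shows "dS vs = 0"
proof -
  have "CARD('n) \<noteq> 0" by simp
  then have "CARD('n) \<ge> 2" using assms(1) by presburger
  then interpret hspan_family vs using assms(2,3) by unfold_locales
  let ?N = "{i. i < length vs \<and> positive_index i}"
  have "(\<Sum>i\<in>?N. (-1)^i * del_sign i) = 0"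
  proof (cases rule: positive_indices_cases)
    case 1
    then show ?thesis by (simp only: sum.empty)
  next
    case (2 p q)
    then show ?thesis using del_signs_cancel[of p q] by simp
  qed
  then show ?thesis using dS_as_positive_sum by simp
qed

end
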